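(* Let $n,k$ be integers with $2\le k\le n/2$ such that $p=\gcd(n,k-1)>1$, and let $q=n/p$. Choose positive angles $\theta_1,\dots,\theta_p$ with $\theta_1+\dots+\theta_p=2\pi/q$. Divide the unit circle into $q$ equal arcs, and divide each of these arcs into $p$ consecutive arcs of angular lengths $\theta_1,\dots,\theta_p$, in this order. Then the inscribed $n$-gon whose vertices are the $n$ resulting division points is a Gutkin $(n,k)$-gon.
   Context: Let $P$ be a convex $n$-gon in the Euclidean plane with vertices $v_0,\dots,v_{n-1}$ in their cyclic (counterclockwise) order, indices taken modulo $n$. $P$ is a Gutkin $(n,k)$-gon if there exists an angle $\alpha$ such that for every $i$, $\angle v_{i+1}v_iv_{i+k}=\angle v_{i+k-1}v_{i+k}v_i=\alpha$, where $\angle abc$ denotes the angle at $b$ between the segments $ba$ and $bc$. *)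

theory Defs
  imports "HOL-Analysis.Analysis"
begin

text \<open>Points of the Euclidean plane are represented as complex numbers.
  The angle at b between the segments ba and bc (value in [0, pi]).\<close>
definition angle_at :: "complex \<Rightarrow> complex \<Rightarrow> complex \<Rightarrow> real" where
  "angle_at a b c = arccos (((a - b) \<bullet> (c - b)) / (norm (a - b) * norm (c - b)))"

definition cross2 :: "complex \<Rightarrow> complex \<Rightarrow> real" where
  "cross2 u w = Re u * Im w - Im u * Re w"

text \<open>v 0, ..., v (n-1) (indices taken mod n) are the vertices, in counterclockwise
  cyclic order, of a convex n-gon: n \<ge> 3, the vertices are distinct, and every vertex
  not on an edge lies strictly to the left of that (directed) edge.\<close>
definition convex_ngon :: "nat \<Rightarrow> (nat \<Rightarrow> complex) \<Rightarrow> bool" where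
  "convex_ngon n v \<longleftrightarrow> 3 \<le> n \<and>
     (\<forall>i<n. \<forall>j<n. i \<noteq> j \<longrightarrow> v i \<noteq> v j) \<and>
     (\<forall>i<n. \<forall>j<n. j \<noteq> i \<and> j \<noteq> (i + 1) mod n \<longrightarrow>
        cross2 (v ((i + 1) mod n) - v i) (v j - v i) > 0)"

definition gutkin_polygon :: "nat \<Rightarrow> nat \<Rightarrow> (nat \<Rightarrow> complex) \<Rightarrow> bool" where
  "gutkin_polygon n k v \<longleftrightarrow> convex_ngon n v \<and>
     (\<exists>\<alpha>. \<forall>i<n.
        angle_at (v ((i + 1) mod n)) (v i) (v ((i + k) mod n)) = \<alpha> \<and>
        angle_at (v ((i + k - 1) mod n)) (v ((i + k) mod n)) (v i) = \<alpha>)"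

end

theory Submission
  imports Defs
begin

text \<open>Put the vertices on the unit circle at strictly increasing angles T m with
  T (m + n) = T m + 2 pi. By the inscribed angle theorem, the angle at v i between v (i + 1) and
  v (i + k) is half the arc T (i + k) - T (i + 1), and symmetrically for the angle at v (i + k);
  both arcs span k - 1 consecutive steps. Since p divides k - 1, such a run of steps always
  consists of (k - 1) / p full periods theta 1, ..., theta p, so all these arcs are equal.\<close>

lemma cis_diff_cis:
  "cis b - cis a = complex_of_real (2 * sin ((b - a) / 2)) * cis ((a + b) / 2 + pi / 2)"
proof -
  have "cis (m + s) - cis (m - s) = complex_of_real (2 * sin s) * cis (m + pi / 2)" for m s
    by (simp add: complex_eq_iff cos_add sin_add cos_diff sin_diff algebra_simps)
  from this[of "(a + b) / 2" "(b - a) / 2"] show ?thesis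
    by (simp add: field_simps)
qed

lemma inner_scaled_cis:
  "(complex_of_real r * cis x) \<bullet> (complex_of_real s * cis y) = r * s * cos (y - x)"
  by (simp add: inner_complex_def cos_diff algebra_simps)

lemma cross2_scaled_cis:
  "cross2 (complex_of_real r * cis x) (complex_of_real s * cis y) = r * s * sin (y - x)"
  by (simp add: cross2_def sin_diff algebra_simps)

lemma norm_scaled_cis: "norm (complex_of_real r * cis x) = \<bar>r\<bar>"
  by (simp add: norm_mult)

lemma angle_at_commute: "angle_at a b c = angle_at c b a"
  unfolding angle_at_def by (simp add: inner_commute mult.commute)

lemma chord_factor_pos:
  assumes "a < b" "b < a + 2 * pi"
  shows "sin ((b - a) / 2) > 0"
  by (rule sin_gt_zero) (use assms in auto)

lemma cis_neq_cis:
  assumes "a < b" "b < a + 2 * pi"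
  shows "cis b \<noteq> cis a"
proof
  assume "cis b = cis a"
  then have "norm (cis b - cis a) = 0" by simp
  then show False
    unfolding cis_diff_cis norm_scaled_cis using chord_factor_pos[OF assms] by simp
qed

lemma cross2_cis_pos:
  assumes "a < b" "b < c" "c < a + 2 * pi"
  shows "cross2 (cis b - cis a) (cis c - cis a) > 0"
proof -
  have "sin ((b - a) / 2) > 0" "sin ((c - a) / 2) > 0" "sin ((c - b) / 2) > 0"
    using assms by (auto intro: chord_factor_pos)
  moreover have "((a + c) / 2 + pi / 2) - ((a + b) / 2 + pi / 2) = (c - b) / 2"
    by (simp add: field_simps)
  ultimately show ?thesis
    unfolding cis_diff_cis[of b] cis_diff_cis[of c] cross2_scaled_cis by (simp only:) simp
qed

lemma inscribed_angle:
  assumes "a < b" "b < c" "c < a + 2 * pi"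
  shows "angle_at (cis b) (cis a) (cis c) = (c - b) / 2"
proof -
  have "sin ((b - a) / 2) > 0" "sin ((c - a) / 2) > 0"
    using assms by (auto intro: chord_factor_pos)
  moreover have "((a + c) / 2 + pi / 2) - ((a + b) / 2 + pi / 2) = (c - b) / 2"
    by (simp add: field_simps)
  ultimately have "angle_at (cis b) (cis a) (cis c) = arccos (cos ((c - b) / 2))"
    unfolding angle_at_def cis_diff_cis[of b] cis_diff_cis[of c] inner_scaled_cis norm_scaled_cis
    by (simp only:) simp
  also have "\<dots> = (c - b) / 2"
    by (rule arccos_cos) (use assms in auto)
  finally show ?thesis .
qed

lemma cis_periodic_mod:
  fixes T :: "nat \<Rightarrow> real"
  assumes "\<And>m. T (m + n) = T m + 2 * pi"
  shows "cis (T (x mod n)) = cis (T x)"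
proof -
  have "cis (T (x mod n + n * N)) = cis (T (x mod n))" for N
  proof (induction N)
    case (Suc N)
    have "T (x mod n + n * Suc N) = T (x mod n + n * N) + 2 * pi"
      using assms[of "x mod n + n * N"] by (simp add: algebra_simps)
    then show ?case using Suc by (simp add: cis_mult[symmetric])
  qed simp
  then show ?thesis by (metis mod_mult_div_eq)
qed

lemma strict_mono_within_lap:
  fixes T :: "nat \<Rightarrow> real"
  assumes "strict_mono T" "\<And>m. T (m + n) = T m + 2 * pi" "a < b" "b < a + n"
  shows "T a < T b" "T b < T a + 2 * pi"
proof -
  show "T a < T b" using assms by (simp add: strict_mono_less)
  have "T b < T (a + n)" using assms(1,4) by (simp add: strict_mono_less)
  then show "T b < T a + 2 * pi" using assms(2)[of a] by simp
qed

lemma convex_ngon_inscribed: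
  fixes T :: "nat \<Rightarrow> real"
  assumes "3 \<le> n" and mono: "strict_mono T" and period: "\<And>m. T (m + n) = T m + 2 * pi"
  shows "convex_ngon n (\<lambda>m. cis (T m))"
  unfolding convex_ngon_def
proof (intro conjI allI impI)
  show "3 \<le> n" by fact
next
  fix i j assume ij: "i < n" "j < n" "i \<noteq> j"
  have "cis (T b) \<noteq> cis (T a)" if "a < b" "b < n" for a b
    using that strict_mono_within_lap[OF mono period, of a b] by (simp add: cis_neq_cis)
  then show "cis (T i) \<noteq> cis (T j)"
    using ij by (metis linorder_neqE_nat)
next
  fix i j assume ij: "i < n" "j < n" "j \<noteq> i \<and> j \<noteq> (i + 1) mod n"
  \<comment> \<open>lift j to the lap of the circle that starts at i\<close>
  define j' where "j' = (if i < j then j else j + n)"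
  have "i + 1 < j'" "j' < i + n"
    using ij unfolding j'_def by (auto split: if_splits simp: mod_Suc)
  then have "T i < T (i + 1)" "T (i + 1) < T j'" "T j' < T i + 2 * pi"
    using mono strict_mono_within_lap[OF mono period, of i j'] by (auto simp: strict_mono_less)
  then have "cross2 (cis (T (i + 1)) - cis (T i)) (cis (T j') - cis (T i)) > 0"
    by (rule cross2_cis_pos)
  moreover have "cis (T j') = cis (T j)"
    unfolding j'_def using period[of j] by (simp add: cis_mult[symmetric])
  ultimately show "cross2 (cis (T ((i + 1) mod n)) - cis (T i)) (cis (T j) - cis (T i)) > 0"
    using cis_periodic_mod[of T n, OF period] by simp
qed

lemma gutkin_polygon_inscribed:
  fixes T :: "nat \<Rightarrow> real"
  assumes "3 \<le> n" "2 \<le> k" "k < n"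
    and mono: "strict_mono T" and period: "\<And>m. T (m + n) = T m + 2 * pi"
    and shift: "\<And>m. T (m + (k - 1)) = T m + c"
  shows "gutkin_polygon n k (\<lambda>m. cis (T m))"
  unfolding gutkin_polygon_def
proof (intro conjI exI allI impI)
  show "convex_ngon n (\<lambda>m. cis (T m))"
    using assms(1) mono period by (rule convex_ngon_inscribed)
  note lap = strict_mono_within_lap[OF mono period]
  note mod_n = cis_periodic_mod[of T n, OF period]
  have cis_period: "cis (T (m + n)) = cis (T m)" for m
    using period[of m] by (simp add: cis_mult[symmetric])
  fix i assume "i < n"
  have "T (i + k) = T (i + 1) + c"
    using shift[of "i + 1"] assms(2) by simp
  moreover have "angle_at (cis (T (i + 1))) (cis (T i)) (cis (T (i + k)))
      = (T (i + k) - T (i + 1)) / 2"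
    using assms(2,3) lap[of i "i + 1"] lap[of i "i + k"] lap[of "i + 1" "i + k"]
    by (intro inscribed_angle) auto
  ultimately show "angle_at (cis (T ((i + 1) mod n))) (cis (T i)) (cis (T ((i + k) mod n))) = c / 2"
    unfolding mod_n by simp
  have "angle_at (cis (T (i + n))) (cis (T (i + k))) (cis (T (i + n + (k - 1))))
      = (T (i + n + (k - 1)) - T (i + n)) / 2"
    using assms(2,3) lap[of "i + k" "i + n"] lap[of "i + k" "i + n + (k - 1)"]
      lap[of "i + n" "i + n + (k - 1)"]
    by (intro inscribed_angle) auto
  also have "\<dots> = c / 2"
    using shift[of "i + n"] by simp
  moreover have "i + n + (k - 1) = (i + k - 1) + n"
    using assms(2) by simp
  ultimately have "angle_at (cis (T i)) (cis (T (i + k))) (cis (T (i + k - 1))) = c / 2"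
    by (metis cis_period)
  then show "angle_at (cis (T ((i + k - 1) mod n))) (cis (T ((i + k) mod n))) (cis (T i)) = c / 2"
    unfolding mod_n by (simp add: angle_at_commute)
qed

definition arc_division :: "nat \<Rightarrow> (nat \<Rightarrow> real) \<Rightarrow> real \<Rightarrow> nat \<Rightarrow> real" where
  "arc_division p \<theta> \<phi> m = \<phi> + real (m div p) * (\<Sum>l<p. \<theta> l) + (\<Sum>l<m mod p. \<theta> l)"

lemma arc_division_Suc:
  assumes "0 < p"
  shows "arc_division p \<theta> \<phi> (Suc m) = arc_division p \<theta> \<phi> m + \<theta> (m mod p)"
proof (cases "Suc (m mod p) = p")
  case True
  then have "Suc m mod p = 0" "Suc m div p = Suc (m div p)"
    by (simp_all add: mod_Suc div_Suc)
  moreover have "(\<Sum>l<p. \<theta> l) = (\<Sum>l<m mod p. \<theta> l) + \<theta> (m mod p)"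
    using True by (metis sum.lessThan_Suc)
  ultimately show ?thesis
    unfolding arc_division_def by (simp add: algebra_simps)
next
  case False
  then have "Suc m mod p = Suc (m mod p)" "Suc m div p = m div p"
    by (simp_all add: mod_Suc div_Suc)
  then show ?thesis
    unfolding arc_division_def by simp
qed

lemma strict_mono_arc_division:
  assumes "0 < p" "\<forall>i<p. \<theta> i > 0"
  shows "strict_mono (arc_division p \<theta> \<phi>)"
  by (rule strict_monoI_Suc) (use assms in \<open>simp add: arc_division_Suc\<close>)

lemma arc_division_add_periods:
  assumes "0 < p"
  shows "arc_division p \<theta> \<phi> (m + p * r) = arc_division p \<theta> \<phi> m + real r * (\<Sum>l<p. \<theta> l)"
proof -
  have "(m + p * r) div p = m div p + r" "(m + p * r) mod p = m mod p"
    using assms by simp_all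
  then show ?thesis
    unfolding arc_division_def by (simp add: algebra_simps)
qed

theorem mainTheorem13:
  fixes n k p q :: nat and \<theta> :: "nat \<Rightarrow> real" and \<phi> :: real and v :: "nat \<Rightarrow> complex"
  assumes "2 \<le> k" and "2 * k \<le> n"
    and "p = gcd n (k - 1)" and "p > 1"
    and "q = n div p"
    and "\<forall>i<p. \<theta> i > 0"
    and "(\<Sum>i<p. \<theta> i) = 2 * pi / q"
    and "\<forall>m. v m = cis (\<phi> + 2 * pi * real (m div p) / real q + (\<Sum>l< m mod p. \<theta> l))"
  shows "gutkin_polygon n k v"
proof -
  define T where "T = arc_division p \<theta> \<phi>"
  have n_eq: "n = p * q" using assms(3,5) by simp
  then have "q > 0" using assms(1,2) by (cases q) auto
  obtain r where r: "k - 1 = p * r" using assms(3) by (metis dvd_def gcd_dvd2)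
  have v_eq: "v = (\<lambda>m. cis (T m))"
    using assms(7,8) unfolding T_def arc_division_def by (auto simp: field_simps)
  have "T (m + n) = T m + 2 * pi" for m
    using arc_division_add_periods[of p \<theta> \<phi> m q] assms(4,7) \<open>q > 0\<close> n_eq
    unfolding T_def by simp
  moreover have "T (m + (k - 1)) = T m + real r * (2 * pi / q)" for m
    using arc_division_add_periods[of p \<theta> \<phi> m r] assms(4,7) r unfolding T_def by simp
  moreover have "strict_mono T"
    unfolding T_def using assms(4,6) by (simp add: strict_mono_arc_division)
  ultimately show ?thesis
    unfolding v_eq using assms(1,2) by (intro gutkin_polygon_inscribed) auto
qed

end
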